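(* Let $(F,<_F)$ and $(G,<_G)$ be ordered groups and let $\prec$ be the ordering of $F*G$ described in the context. Then the kernel of the canonical homomorphism $\alpha\colon F*G\to F\times G$, $\alpha(f_1g_1\cdots f_kg_k)=(f_1\cdots f_k,g_1\cdots g_k)$, is a convex subset of $(F*G,\prec)$.
   Context: A subset $C$ of an ordered group $(H,<)$ is convex if $c<h<c'$ with $c,c'\in C$ implies $h\in C$. Construction of $\prec$: order $F\times G$ lexicographically ($(f,g)<(f',g')$ iff $f<_Ff'$, or $f=f'$ and $g<_Gg'$); in $R=\mathbb{Z}(F\times G)$ call a nonzero element positive if the coefficient of its largest group element is a positive integer. Let $\rho\colon F*G\to M_2(R[t])$ be the homomorphism with $\rho(f)=\begin{pmatrix} f&(f-1)t\\0&1\end{pmatrix}$, $\rho(g)=\begin{pmatrix}1&0\\(g-1)t&g\end{pmatrix}$; it is injective. Order matrix positions $(1,1)$, $(2,2)$, then the off-diagonal ones in a fixed order. A nonzero $M=\sum_iM_it^i$ is positive if for the least $n$ with $M_n\ne0$ the first nonzero entry of $M_n$ is positive in $R$. Set $x\prec y$ iff $\rho(y)-\rho(x)$ is positive. *)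

theory Defs
  imports "HOL-Library.Poly_Mapping" "HOL-Library.Product_Plus"
begin

text \<open>An ordered group: a strict total order on the group that is invariant under
  multiplication on both sides (group operation written as \<open>+\<close>, identity \<open>0\<close>).\<close>
definition ordered_group :: "('a::group_add \<Rightarrow> 'a \<Rightarrow> bool) \<Rightarrow> bool" where
  "ordered_group lt \<longleftrightarrow>
     (\<forall>a. \<not> lt a a) \<and>
     (\<forall>a b c. lt a b \<longrightarrow> lt b c \<longrightarrow> lt a c) \<and>
     (\<forall>a b. lt a b \<or> a = b \<or> lt b a) \<and>
     (\<forall>a b c. lt a b \<longrightarrow> lt (c + a) (c + b) \<and> lt (a + c) (b + c))"

definition convex_in :: "'a set \<Rightarrow> ('a \<Rightarrow> 'a \<Rightarrow> bool) \<Rightarrow> 'a set \<Rightarrow> bool" where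
  "convex_in H lt C \<longleftrightarrow>
     (\<forall>c\<in>C. \<forall>c'\<in>C. \<forall>h\<in>H. lt c h \<longrightarrow> lt h c' \<longrightarrow> h \<in> C)"

text \<open>Elements of \<open>F*G\<close> are reduced words: finite lists of nontrivial letters from
  \<open>F\<close> (\<open>Inl\<close>) or \<open>G\<close> (\<open>Inr\<close>), no two consecutive letters from the same factor.\<close>
fun same_side :: "'f + 'g \<Rightarrow> 'f + 'g \<Rightarrow> bool" where
  "same_side (Inl _) (Inl _) = True"
| "same_side (Inr _) (Inr _) = True"
| "same_side _ _ = False"

fun nontriv :: "('f::zero) + ('g::zero) \<Rightarrow> bool" where
  "nontriv (Inl f) = (f \<noteq> 0)"
| "nontriv (Inr g) = (g \<noteq> 0)"

definition free_product :: "(('f::group_add) + ('g::group_add)) list set" where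
  "free_product = {w. (\<forall>x\<in>set w. nontriv x) \<and>
                      (\<forall>i. Suc i < length w \<longrightarrow> \<not> same_side (w ! i) (w ! Suc i))}"

definition alpha :: "(('f::group_add) + ('g::group_add)) list \<Rightarrow> 'f \<times> 'g" where
  "alpha w = (sum_list [f. Inl f \<leftarrow> w], sum_list [g. Inr g \<leftarrow> w])"

definition alpha_kernel :: "(('f::group_add) + ('g::group_add)) list set" where
  "alpha_kernel = {w \<in> free_product. alpha w = (0, 0)}"

type_synonym ('f, 'g) grpring = "('f \<times> 'g) \<Rightarrow>\<^sub>0 int"

definition lex_less :: "('f \<Rightarrow> 'f \<Rightarrow> bool) \<Rightarrow> ('g \<Rightarrow> 'g \<Rightarrow> bool) \<Rightarrow> 'f \<times> 'g \<Rightarrow> 'f \<times> 'g \<Rightarrow> bool" where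
  "lex_less lF lG x y \<longleftrightarrow> lF (fst x) (fst y) \<or> (fst x = fst y \<and> lG (snd x) (snd y))"

definition R_positive :: "('f \<Rightarrow> 'f \<Rightarrow> bool) \<Rightarrow> ('g \<Rightarrow> 'g \<Rightarrow> bool) \<Rightarrow> ('f, 'g) grpring \<Rightarrow> bool" where
  "R_positive lF lG a \<longleftrightarrow> a \<noteq> 0 \<and>
     (\<exists>x\<in>Poly_Mapping.keys a. (\<forall>y\<in>Poly_Mapping.keys a. y = x \<or> lex_less lF lG y x) \<and> Poly_Mapping.lookup a x > 0)"

text \<open>An element \<open>M = \<Sum>\<^sub>n M\<^sub>n t\<^sup>n\<close> of \<open>M\<^sub>2(R[t])\<close> is represented by its coefficient
  function \<open>M n i j\<close> (degree \<open>n\<close>, row \<open>i\<close>, column \<open>j\<close>, with \<open>i, j \<in> {0,1}\<close>;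
  entries outside are irrelevant). The variable \<open>t\<close> is central.\<close>
type_synonym 'r tmat = "nat \<Rightarrow> nat \<Rightarrow> nat \<Rightarrow> 'r"

definition tm_one :: "('r::{zero,one}) tmat" where
  "tm_one = (\<lambda>n i j. if n = 0 \<and> i = j then 1 else 0)"

definition tm_mult :: "('r::semiring_0) tmat \<Rightarrow> 'r tmat \<Rightarrow> 'r tmat" where
  "tm_mult A B = (\<lambda>n i j. \<Sum>k\<le>n. \<Sum>m<2. A k i m * B (n - k) m j)"

definition tm_diff :: "('r::minus) tmat \<Rightarrow> 'r tmat \<Rightarrow> 'r tmat" where
  "tm_diff A B = (\<lambda>n i j. A n i j - B n i j)"

definition grp :: "('f::zero) \<times> ('g::zero) \<Rightarrow> ('f, 'g) grpring" where
  "grp x = Poly_Mapping.single x 1"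

fun rho_letter :: "('f::group_add) + ('g::group_add) \<Rightarrow> ('f, 'g) grpring tmat" where
  "rho_letter (Inl f) = (\<lambda>n i j.
      if n = 0 then (if i = 0 \<and> j = 0 then grp (f, 0) else if i = 1 \<and> j = 1 then 1 else 0)
      else if n = 1 then (if i = 0 \<and> j = 1 then grp (f, 0) - 1 else 0)
      else 0)"
| "rho_letter (Inr g) = (\<lambda>n i j.
      if n = 0 then (if i = 0 \<and> j = 0 then 1 else if i = 1 \<and> j = 1 then grp (0, g) else 0)
      else if n = 1 then (if i = 1 \<and> j = 0 then grp (0, g) - 1 else 0)
      else 0)"

definition rho :: "(('f::group_add) + ('g::group_add)) list \<Rightarrow> ('f, 'g) grpring tmat" where
  "rho w = foldr (\<lambda>x M. tm_mult (rho_letter x) M) w tm_one"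

definition positions :: "bool \<Rightarrow> (nat \<times> nat) list" where
  "positions b = (if b then [(0,0),(1,1),(0,1),(1,0)] else [(0,0),(1,1),(1,0),(0,1)])"

definition tm_positive ::
  "bool \<Rightarrow> ('f \<Rightarrow> 'f \<Rightarrow> bool) \<Rightarrow> ('g \<Rightarrow> 'g \<Rightarrow> bool) \<Rightarrow> ('f, 'g) grpring tmat \<Rightarrow> bool" where
  "tm_positive b lF lG M \<longleftrightarrow>
     (\<exists>n k. k < 4 \<and>
        (\<forall>m<n. \<forall>i<2. \<forall>j<2. M m i j = 0) \<and>
        (\<forall>l<k. case positions b ! l of (i, j) \<Rightarrow> M n i j = 0) \<and>
        (case positions b ! k of (i, j) \<Rightarrow> R_positive lF lG (M n i j)))"

definition fp_less ::
  "bool \<Rightarrow> ('f::group_add \<Rightarrow> 'f \<Rightarrow> bool) \<Rightarrow> ('g::group_add \<Rightarrow> 'g \<Rightarrow> bool) \<Rightarrow>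
   ('f + 'g) list \<Rightarrow> ('f + 'g) list \<Rightarrow> bool" where
  "fp_less b lF lG x y \<longleftrightarrow> tm_positive b lF lG (tm_diff (rho y) (rho x))"

end

theory Submission
  imports Defs
begin

text \<open>The degree-zero coefficient of \<open>\<rho>(w)\<close> is the diagonal matrix
  \<open>diag(\<alpha>\<^sub>F(w), \<alpha>\<^sub>G(w))\<close>. The leading term of \<open>\<rho>(y) - \<rho>(x)\<close> is therefore read off
  this diagonal unless \<open>\<alpha>(x) = \<alpha>(y)\<close>, so \<open>\<alpha>\<close> maps \<open>\<prec>\<close> into the lexicographic order
  of \<open>F \<times> G\<close>: if \<open>x \<prec> y\<close> and \<open>\<alpha>(x) \<noteq> \<alpha>(y)\<close> then \<open>\<alpha>(x) < \<alpha>(y)\<close>. Hence an element strictly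
  between two elements of the kernel has image both above and below \<open>(1,1)\<close> unless it
  lies in the kernel itself.\<close>

lemma rho_coeff_zero:
  "rho w 0 0 0 = grp (fst (alpha w), 0) \<and> rho w 0 1 1 = grp (0, snd (alpha w))
   \<and> rho w 0 0 1 = 0 \<and> rho w 0 1 0 = 0"
proof (induction w)
  case Nil
  then show ?case by (simp add: rho_def alpha_def tm_one_def grp_def zero_prod_def[symmetric])
next
  case (Cons x w)
  have rho_Cons: "rho (x # w) = tm_mult (rho_letter x) (rho w)" by (simp add: rho_def)
  show ?case
    using Cons unfolding rho_Cons
    by (cases x) (simp_all add: tm_mult_def numeral_2_eq_2 lessThan_Suc alpha_def grp_def mult_single)
qed

lemma grp_diff_eq_zero_iff: "grp p - grp q = 0 \<longleftrightarrow> p = q"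
proof
  assume "grp p - grp q = 0"
  then have "Poly_Mapping.lookup (grp p - grp q) p = 0" by simp
  then show "p = q" by (auto simp: grp_def lookup_minus lookup_single split: if_splits)
qed simp

lemma R_positive_grp_diff:
  assumes "R_positive lF lG (grp p - grp q)" and "p \<noteq> q"
  shows "lex_less lF lG q p"
proof -
  have lookup: "Poly_Mapping.lookup (grp p - grp q) y = (if y = p then 1 else if y = q then -1 else 0)" for y
    using assms(2) by (simp add: grp_def lookup_minus lookup_single)
  obtain x where top: "\<forall>y\<in>Poly_Mapping.keys (grp p - grp q). y = x \<or> lex_less lF lG y x"
    and pos: "Poly_Mapping.lookup (grp p - grp q) x > 0"
    using assms(1) unfolding R_positive_def by blast
  have "x = p" using pos lookup[of x] by (auto split: if_splits)
  moreover have "q \<in> Poly_Mapping.keys (grp p - grp q)"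
    using lookup[of q] assms(2) by (simp add: in_keys_iff)
  ultimately show ?thesis using top assms(2) by auto
qed

lemma tm_positive_coeff_zero:
  assumes "tm_positive b lF lG M"
  shows "M 0 0 0 \<noteq> 0 \<Longrightarrow> R_positive lF lG (M 0 0 0)"
    and "M 0 0 0 = 0 \<Longrightarrow> M 0 1 1 \<noteq> 0 \<Longrightarrow> R_positive lF lG (M 0 1 1)"
proof -
  obtain n k where "k < 4" and lower: "\<forall>m<n. \<forall>i<2. \<forall>j<2. M m i j = 0"
    and before: "\<forall>l<k. case positions b ! l of (i, j) \<Rightarrow> M n i j = 0"
    and first: "case positions b ! k of (i, j) \<Rightarrow> R_positive lF lG (M n i j)"
    using assms unfolding tm_positive_def by (elim exE conjE) (rule that)
  have p0: "positions b ! 0 = (0,0)" and p1: "positions b ! 1 = (1,1)"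
    by (simp_all add: positions_def)
  consider "0 < n" | "n = 0" "k = 0" | "n = 0" "k = 1" | "n = 0" "1 < k" by linarith
  then have "(M 0 0 0 \<noteq> 0 \<longrightarrow> R_positive lF lG (M 0 0 0)) \<and>
             (M 0 0 0 = 0 \<longrightarrow> M 0 1 1 \<noteq> 0 \<longrightarrow> R_positive lF lG (M 0 1 1))"
  proof cases
    case 1
    then show ?thesis using lower[rule_format, of 0] by simp
  next
    case 2
    then show ?thesis using first p0 by (auto simp: R_positive_def)
  next
    case 3
    then show ?thesis using first before[rule_format, of 0] p0 p1 by simp
  next
    case 4
    then show ?thesis using before[rule_format, of 0] before[rule_format, of 1] p0 p1 by simp
  qed
  then show "M 0 0 0 \<noteq> 0 \<Longrightarrow> R_positive lF lG (M 0 0 0)"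
    and "M 0 0 0 = 0 \<Longrightarrow> M 0 1 1 \<noteq> 0 \<Longrightarrow> R_positive lF lG (M 0 1 1)" by blast+
qed

lemma lex_less_alpha_if_fp_less:
  fixes v w :: "('f::group_add + 'g::group_add) list"
  assumes "irreflp lF" and "fp_less b lF lG v w" and "alpha v \<noteq> alpha w"
  shows "lex_less lF lG (alpha v) (alpha w)"
proof -
  obtain a g where v: "alpha v = (a, g)" by fastforce
  obtain a' g' where w: "alpha w = (a', g')" by fastforce
  let ?M = "tm_diff (rho w) (rho v)"
  have pos: "tm_positive b lF lG ?M" using assms(2) by (simp add: fp_less_def)
  have M00: "?M 0 0 0 = grp (a', 0) - grp (a, 0)" and M11: "?M 0 1 1 = grp (0, g') - grp (0, g)"
    using rho_coeff_zero[of v] rho_coeff_zero[of w] v w by (simp_all add: tm_diff_def)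
  show ?thesis
  proof (cases "a = a'")
    case False
    then have "(a', 0) \<noteq> (a, 0)" by simp
    moreover from this have "R_positive lF lG (grp (a', 0) - grp (a, 0))"
      using tm_positive_coeff_zero(1)[OF pos] M00 grp_diff_eq_zero_iff by metis
    ultimately have "lex_less lF lG (a, 0) (a', 0)" by (rule R_positive_grp_diff[rotated])
    then show ?thesis using False v w by (simp add: lex_less_def)
  next
    case True
    then have "g \<noteq> g'" using assms(3) v w by simp
    then have "(0, g') \<noteq> (0, g)" by simp
    moreover from this have "R_positive lF lG (grp (0, g') - grp (0, g))"
      using tm_positive_coeff_zero(2)[OF pos] M00 M11 True grp_diff_eq_zero_iff by metis
    ultimately have "lex_less lF lG (0, g) (0, g')" by (rule R_positive_grp_diff[rotated])
    then show ?thesis using True v w irreflpD[OF assms(1)] by (simp add: lex_less_def)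
  qed
qed

lemma asymp_lex_less:
  assumes "asymp lF" and "asymp lG"
  shows "asymp (lex_less lF lG)"
proof
  fix x y
  show "lex_less lF lG x y \<Longrightarrow> \<not> lex_less lF lG y x"
    using asympD[OF assms(1)] asympD[OF assms(2)] by (auto simp: lex_less_def) blast+
qed

lemma asymp_if_ordered_group: "ordered_group lt \<Longrightarrow> asymp lt"
  by (simp add: ordered_group_def asymp_on_iff_irreflp_on_if_transp_on transp_on_def irreflp_on_def)

theorem corollary4p3:
  fixes lessF :: "'f::group_add \<Rightarrow> 'f \<Rightarrow> bool"
    and lessG :: "'g::group_add \<Rightarrow> 'g \<Rightarrow> bool"
    and b :: bool
  assumes "ordered_group lessF" and "ordered_group lessG"
  shows "convex_in (free_product :: ('f + 'g) list set) (fp_less b lessF lessG) alpha_kernel"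
  unfolding convex_in_def
proof (intro ballI impI)
  fix c c' h :: "('f + 'g) list"
  assume c: "c \<in> alpha_kernel" and c': "c' \<in> alpha_kernel" and h: "h \<in> free_product"
    and below: "fp_less b lessF lessG c h" and above: "fp_less b lessF lessG h c'"
  have asym_F: "asymp lessF" and asym_G: "asymp lessG"
    using assms by (simp_all add: asymp_if_ordered_group)
  have c0: "alpha c = 0" and c'0: "alpha c' = 0"
    using c c' by (simp_all add: alpha_kernel_def zero_prod_def)
  have "alpha h = 0"
  proof (rule ccontr)
    assume h0: "alpha h \<noteq> 0"
    have irrefl_F: "irreflp lessF" using asym_F by simp
    have "lex_less lessF lessG 0 (alpha h)"
      using lex_less_alpha_if_fp_less[OF irrefl_F below] c0 h0 by simp
    moreover have "lex_less lessF lessG (alpha h) 0"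
      using lex_less_alpha_if_fp_less[OF irrefl_F above] c'0 h0 by simp
    ultimately show False using asympD[OF asymp_lex_less[OF asym_F asym_G]] by blast
  qed
  then show "h \<in> alpha_kernel" using h by (simp add: alpha_kernel_def zero_prod_def)
qed

end
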